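(* Let $n$ be a positive odd integer. Then $$ \sum_{k=0}^{n-1}\frac{(aq;q^2)_k\,(q/a;q^2)_k}{(q^2;q^2)_k^2}\,q^{2k} \equiv (-1)^{(n-1)/2}q^{(n^2-1)/4}\pmod{(1-aq^n)(a-q^n)}. $$
   Context: $a,q$ are indeterminates. The $q$-shifted factorial is $(y;q)_0=1$ and $(y;q)_m=(1-y)(1-yq)\cdots(1-yq^{m-1})$ for $m\geqslant1$. For rational functions $A,B$ and a polynomial $P$, $A\equiv B\pmod P$ means $A-B=P\cdot C/D$ for polynomials $C,D$ with $D$ coprime to $P$. *)

theory Defs
  imports "HOL-Computational_Algebra.Computational_Algebra"
begin

text \<open>Bivariate polynomials over the rationals: the outer variable is a, the inner
  (coefficient) variable is q.  Rational functions in a, q are elements of the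
  fraction field of this polynomial ring.\<close>

type_synonym bipoly = "rat poly poly"
type_synonym ratfun = "bipoly fract"

definition var_a :: bipoly where "var_a = [:0, 1:]"
definition var_q :: bipoly where "var_q = [:[:0, 1:]:]"

definition fa :: ratfun where "fa = to_fract var_a"
definition fq :: ratfun where "fq = to_fract var_q"

definition qpoch :: "ratfun \<Rightarrow> ratfun \<Rightarrow> nat \<Rightarrow> ratfun" where
  "qpoch y p m = (\<Prod>j<m. 1 - y * p ^ j)"

definition qcong :: "ratfun \<Rightarrow> ratfun \<Rightarrow> bipoly \<Rightarrow> bool" where
  "qcong A B P \<longleftrightarrow> (\<exists>C D. D \<noteq> 0 \<and> coprime D P \<and>
      A - B = to_fract P * to_fract C / to_fract D)"

end

(* Modulo (1 - a q^n)(a - q^n) one may put a = q^n in every summand: the factor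
   (1 - a q^(2j+1))(1 - q^(2j+1)/a) changes by (1 - a q^n)(a - q^n) q^(2j+1)/(a q^n), and all
   denominators are products of powers of a with polynomials in q alone, hence coprime to the
   modulus.  For n = 2m+1 the specialised sum is the terminating basic hypergeometric sum
   \<Sum>k (q^(-2m);q^2)_k (q^(2m+2);q^2)_k q^(2k) / (q^2;q^2)_k^2, whose value (-1)^m q^(m(m+1))
   follows by induction on m from a WZ-style telescoping certificate. *)

theory Submission
  imports Defs "HOL-Computational_Algebra.Field_as_Ring"
begin

section \<open>A terminating q-Chu--Vandermonde sum\<close>

definition q_pochhammer :: "'a::comm_ring_1 \<Rightarrow> 'a \<Rightarrow> nat \<Rightarrow> 'a" where
  "q_pochhammer y p m = (\<Prod>j<m. 1 - y * p ^ j)"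

lemma qpoch_eq_q_pochhammer: "qpoch = q_pochhammer"
  by (simp add: fun_eq_iff qpoch_def q_pochhammer_def)

lemma q_pochhammer_0 [simp]: "q_pochhammer y p 0 = 1"
  by (simp add: q_pochhammer_def)

lemma q_pochhammer_Suc: "q_pochhammer y p (Suc k) = q_pochhammer y p k * (1 - y * p ^ k)"
  by (simp add: q_pochhammer_def)

lemma q_pochhammer_Suc_shift: "q_pochhammer y p (Suc k) = (1 - y) * q_pochhammer (y * p) p k"
  unfolding q_pochhammer_def
  by (subst prod.lessThan_Suc_shift) (simp add: mult.assoc power_commutes)

definition qchu_term :: "'a::field \<Rightarrow> nat \<Rightarrow> nat \<Rightarrow> 'a" where
  "qchu_term p m k =
     q_pochhammer (1 / p ^ m) p k * q_pochhammer (p ^ Suc m) p k / (q_pochhammer p p k)\<^sup>2 * p ^ k"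

lemma qchu_term_0 [simp]: "qchu_term p m 0 = 1"
  by (simp add: qchu_term_def)

lemma qchu_term_eq_0:
  assumes "p \<noteq> 0" and "m < k"
  shows "qchu_term p m k = 0"
proof -
  have "q_pochhammer (1 / p ^ m) p k = 0"
    unfolding q_pochhammer_def using assms by (auto intro!: bexI[of _ m])
  then show ?thesis by (simp add: qchu_term_def)
qed

context
  fixes p :: "'a::field"
  assumes p_nonzero: "p \<noteq> 0" and p_not_root_of_unity: "\<And>i. i > 0 \<Longrightarrow> p ^ i \<noteq> 1"
begin

lemma one_minus_power_nonzero: "i > 0 \<Longrightarrow> 1 - p ^ i \<noteq> 0"
  using p_not_root_of_unity by simp

lemma q_pochhammer_base_nonzero: "q_pochhammer p p k \<noteq> 0"
  unfolding q_pochhammer_def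
  using one_minus_power_nonzero by (simp flip: power_Suc)

lemma qchu_term_Suc:
  "qchu_term p m (Suc k) * (1 - p ^ Suc k)\<^sup>2 =
     qchu_term p m k * (1 - p ^ k / p ^ m) * (1 - p ^ Suc m * p ^ k) * p"
proof -
  define A B C u where "A = q_pochhammer (1 / p ^ m) p k" and "B = q_pochhammer (p ^ Suc m) p k"
    and "C = q_pochhammer p p k" and "u = 1 - p ^ Suc k"
  have nonzero: "C \<noteq> 0" "u \<noteq> 0" "p \<noteq> 0"
    using q_pochhammer_base_nonzero one_minus_power_nonzero[of "Suc k"] p_nonzero
    by (simp_all add: C_def u_def)
  have Suc_k: "qchu_term p m (Suc k) =
      A * (1 - p ^ k / p ^ m) * (B * (1 - p ^ Suc m * p ^ k)) / (C * u)\<^sup>2 * (p ^ k * p)"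
    by (simp add: qchu_term_def q_pochhammer_Suc A_def B_def C_def u_def mult.commute)
  have k: "qchu_term p m k = A * B / C\<^sup>2 * p ^ k"
    by (simp add: qchu_term_def A_def B_def C_def)
  show ?thesis
    unfolding Suc_k k u_def[symmetric] using nonzero by (simp add: field_simps)
qed

lemma qchu_term_Suc_param:
  "qchu_term p m k * (1 - p ^ Suc m * p ^ k) = qchu_term p (Suc m) k * (p ^ k - p ^ Suc m)"
proof -
  define X y where "X = p ^ Suc m" and "y = p ^ k"
  define A A' B B' C where "A = q_pochhammer (1 / p ^ m) p k" and "A' = q_pochhammer (1 / X) p k"
    and "B = q_pochhammer X p k" and "B' = q_pochhammer (X * p) p k" and "C = q_pochhammer p p k"
  have X: "X \<noteq> 0" "X \<noteq> 1"
    using p_nonzero one_minus_power_nonzero[of "Suc m"] by (auto simp: X_def)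
  have "A * (1 - 1 / X) = q_pochhammer (1 / X) p (Suc k)"
    using q_pochhammer_Suc_shift[of "1 / X" p k] p_nonzero by (simp add: A_def X_def mult.commute)
  also have "\<dots> = A' * (1 - y / X)"
    by (simp add: q_pochhammer_Suc A'_def y_def)
  finally have lower: "A = A' * ((X - y) / (X - 1))"
    using X by (simp add: field_simps)
  have upper: "B * (1 - X * y) = (1 - X) * B'"
    using q_pochhammer_Suc[of X p k] q_pochhammer_Suc_shift[of X p k] by (simp add: B_def B'_def y_def)
  have "qchu_term p m k * (1 - X * y) = A * (B * (1 - X * y)) / C\<^sup>2 * y"
    by (simp add: qchu_term_def A_def B_def C_def X_def y_def)
  also have "\<dots> = A' * B' / C\<^sup>2 * y * ((X - y) * ((1 - X) / (X - 1)))"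
    by (simp add: upper lower ac_simps)
  also have "(1 - X) / (X - 1) = -1"
    using X by (simp add: field_simps)
  also have "A' * B' / C\<^sup>2 * y * ((X - y) * -1) = qchu_term p (Suc m) k * (y - X)"
    by (simp add: qchu_term_def A'_def B'_def C_def X_def y_def ac_simps)
  finally show ?thesis by (simp add: X_def y_def)
qed

text \<open>A WZ pair: summed over k, the right-hand side telescopes to 0, giving the recurrence in m.\<close>

lemma qchu_term_telescoping:
  fixes m k :: nat
  defines "X \<equiv> p ^ Suc m"
  defines "H \<equiv> \<lambda>k. qchu_term p (Suc m) k * (X + 1) * X * (1 - p ^ k)\<^sup>2
                    / ((X - 1) * p ^ k * (1 - X * p ^ k))"
  shows "qchu_term p (Suc m) k + X * qchu_term p m k = H (Suc k) - H k"
proof -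
  define t y where "t = qchu_term p (Suc m) k" and "y = p ^ k"
  have powers: "X * y = p ^ (Suc m + k)" "X * p * y = p ^ (Suc (Suc m) + k)"
    by (simp_all add: X_def y_def power_add mult_ac)
  have nz: "X \<noteq> 0" "X - 1 \<noteq> 0" "y \<noteq> 0" "1 - X * y \<noteq> 0" "1 - X * p * y \<noteq> 0" "p \<noteq> 0"
    unfolding powers using p_nonzero by (simp_all add: X_def y_def p_not_root_of_unity del: power_Suc)
  have lower: "qchu_term p m k = t * (y - X) / (1 - X * y)"
    using qchu_term_Suc_param[of m k] nz by (simp add: t_def y_def X_def field_simps)
  have partial_fractions: "a / w = b / (v * y) - c / (v * y * w)"
    if "a * (v * y) = b * w - c" "v \<noteq> 0" "w \<noteq> 0" for a b c v w
    using that nz by (simp add: field_simps)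
  have "qchu_term p (Suc m) k + X * qchu_term p m k = t * (1 - X\<^sup>2) / (1 - X * y)"
    unfolding lower t_def[symmetric] using nz by (simp add: field_simps power2_eq_square)
  also have "\<dots> = t * (X - y) * (X + 1) / ((X - 1) * y)
      - t * (X + 1) * X * (1 - y)\<^sup>2 / ((X - 1) * y * (1 - X * y))"
    by (rule partial_fractions) (use nz in \<open>simp_all, algebra\<close>)
  also have "t * (X - y) * (X + 1) / ((X - 1) * y) = H (Suc k)"
  proof -
    have "H (Suc k) = qchu_term p (Suc m) (Suc k) * (1 - p * y)\<^sup>2 * (X + 1) * X
        / ((X - 1) * (p * y) * (1 - X * p * y))"
      by (simp add: H_def y_def mult.assoc)
    also have "qchu_term p (Suc m) (Suc k) * (1 - p * y)\<^sup>2 = t * (1 - y / X) * (1 - X * p * y) * p"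
      using qchu_term_Suc[of "Suc m" k] by (simp add: t_def y_def X_def ac_simps)
    also have "t * (1 - y / X) * (1 - X * p * y) * p * (X + 1) * X / ((X - 1) * (p * y) * (1 - X * p * y))
        = t * ((1 - y / X) * X) * (X + 1) * ((1 - X * p * y) * p) / ((X - 1) * y * ((1 - X * p * y) * p))"
      by (simp add: ac_simps)
    also have "\<dots> = t * ((1 - y / X) * X) * (X + 1) / ((X - 1) * y)"
      using nz by (intro mult_divide_mult_cancel_right) simp
    also have "(1 - y / X) * X = X - y"
      using nz by (simp add: field_simps)
    finally show ?thesis ..
  qed
  also have "t * (X + 1) * X * (1 - y)\<^sup>2 / ((X - 1) * y * (1 - X * y)) = H k"
    by (simp add: H_def t_def y_def ac_simps)
  finally show ?thesis .
qed

lemma qchu_sum: "(\<Sum>k\<le>m. qchu_term p m k) = (-1) ^ m * p ^ (m * Suc m div 2)"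
proof (induction m)
  case 0
  then show ?case by simp
next
  case (Suc m)
  define X where "X = p ^ Suc m"
  define H where "H k = qchu_term p (Suc m) k * (X + 1) * X * (1 - p ^ k)\<^sup>2
                         / ((X - 1) * p ^ k * (1 - X * p ^ k))" for k
  have "(\<Sum>k<Suc (Suc m). qchu_term p (Suc m) k + X * qchu_term p m k) = H (Suc (Suc m)) - H 0"
    unfolding X_def H_def qchu_term_telescoping by (rule sum_lessThan_telescope)
  also have "\<dots> = 0"
    using qchu_term_eq_0[OF p_nonzero, of "Suc m" "Suc (Suc m)"] by (simp add: H_def)
  finally have "(\<Sum>k\<le>Suc m. qchu_term p (Suc m) k) + X * (\<Sum>k\<le>Suc m. qchu_term p m k) = 0"
    by (simp only: lessThan_Suc_atMost sum.distrib sum_distrib_left)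
  moreover have "(\<Sum>k\<le>Suc m. qchu_term p m k) = (\<Sum>k\<le>m. qchu_term p m k)"
    using qchu_term_eq_0[OF p_nonzero, of m "Suc m"] by simp
  ultimately have "(\<Sum>k\<le>Suc m. qchu_term p (Suc m) k) = - X * ((-1) ^ m * p ^ (m * Suc m div 2))"
    using Suc.IH by (simp add: eq_neg_iff_add_eq_0)
  moreover have "Suc m * Suc (Suc m) div 2 = Suc m + m * Suc m div 2"
    by simp
  ultimately show ?case
    by (simp add: X_def power_add)
qed

end


section \<open>Congruences modulo a polynomial\<close>

text \<open>\<open>X\<close> lies in the localisation at the elements coprime to \<open>P\<close>; by \<open>qcong_iff\<close>,
  \<open>qcong A B P\<close> says that \<open>A - B\<close> is \<open>P\<close> times such an element.\<close>

definition p_integral :: "'a::{idom,semiring_gcd} \<Rightarrow> 'a fract \<Rightarrow> bool" where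
  "p_integral P X \<longleftrightarrow> (\<exists>C D. D \<noteq> 0 \<and> coprime D P \<and> X = to_fract C / to_fract D)"

lemma p_integral_fraction: "D \<noteq> 0 \<Longrightarrow> coprime D P \<Longrightarrow> p_integral P (to_fract C / to_fract D)"
  unfolding p_integral_def by blast

lemma p_integral_to_fract: "p_integral P (to_fract C)"
  using p_integral_fraction[of 1 P C] by simp

lemma p_integral_1: "p_integral P 1"
  using p_integral_to_fract[of P 1] by simp

lemma p_integral_add:
  assumes "p_integral P X" and "p_integral P Y"
  shows "p_integral P (X + Y)"
proof -
  obtain C1 D1 C2 D2 where "D1 \<noteq> 0" "coprime D1 P" "X = to_fract C1 / to_fract D1"
    and "D2 \<noteq> 0" "coprime D2 P" "Y = to_fract C2 / to_fract D2"
    using assms unfolding p_integral_def by blast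
  moreover have "X + Y = to_fract (C1 * D2 + C2 * D1) / to_fract (D1 * D2)"
    using calculation by (simp add: field_simps)
  ultimately show ?thesis
    using p_integral_fraction[of "D1 * D2" P "C1 * D2 + C2 * D1"] by simp
qed

lemma p_integral_mult:
  assumes "p_integral P X" and "p_integral P Y"
  shows "p_integral P (X * Y)"
proof -
  obtain C1 D1 C2 D2 where "D1 \<noteq> 0" "coprime D1 P" "X = to_fract C1 / to_fract D1"
    and "D2 \<noteq> 0" "coprime D2 P" "Y = to_fract C2 / to_fract D2"
    using assms unfolding p_integral_def by blast
  then show ?thesis
    using p_integral_fraction[of "D1 * D2" P "C1 * C2"] by simp
qed

lemma p_integral_diff:
  assumes "p_integral P X" and "p_integral P Y"
  shows "p_integral P (X - Y)"
  using p_integral_add[OF assms(1) p_integral_mult[OF p_integral_to_fract[of P "-1"] assms(2)]]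
  by simp

lemma p_integral_divide:
  "p_integral P X \<Longrightarrow> D \<noteq> 0 \<Longrightarrow> coprime D P \<Longrightarrow> p_integral P (X / to_fract D)"
  using p_integral_mult[of P X "to_fract 1 / to_fract D"] p_integral_fraction[of D P 1] by simp

lemma p_integral_prod: "(\<And>x. x \<in> A \<Longrightarrow> p_integral P (f x)) \<Longrightarrow> p_integral P (prod f A)"
  by (induction A rule: infinite_finite_induct) (simp_all add: p_integral_1 p_integral_mult)

lemma qcong_iff: "qcong A B P \<longleftrightarrow> (\<exists>Z. p_integral P Z \<and> A - B = to_fract P * Z)"
proof
  assume "qcong A B P"
  then obtain C D where "D \<noteq> 0" "coprime D P" "A - B = to_fract P * to_fract C / to_fract D"
    unfolding qcong_def by blast
  then show "\<exists>Z. p_integral P Z \<and> A - B = to_fract P * Z"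
    by (intro exI[of _ "to_fract C / to_fract D"]) (simp add: p_integral_fraction)
next
  assume "\<exists>Z. p_integral P Z \<and> A - B = to_fract P * Z"
  then obtain C D where "D \<noteq> 0" "coprime D P" "A - B = to_fract P * (to_fract C / to_fract D)"
    unfolding p_integral_def by blast
  then show "qcong A B P"
    unfolding qcong_def by (intro exI[of _ C] exI[of _ D]) simp
qed

lemma qcong_refl: "qcong A A P"
  using p_integral_to_fract[of P 0] unfolding qcong_iff by auto

lemma qcong_add: "qcong A1 B1 P \<Longrightarrow> qcong A2 B2 P \<Longrightarrow> qcong (A1 + A2) (B1 + B2) P"
  unfolding qcong_iff by (auto simp: algebra_simps intro!: p_integral_add)

lemma qcong_sum:
  "(\<And>x. x \<in> S \<Longrightarrow> qcong (f x) (g x) P) \<Longrightarrow> qcong (sum f S) (sum g S) P"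
  by (induction S rule: infinite_finite_induct) (simp_all add: qcong_refl qcong_add)

lemma qcong_mult:
  assumes "qcong A1 B1 P" "qcong A2 B2 P" "p_integral P A1" "p_integral P B2"
  shows "qcong (A1 * A2) (B1 * B2) P"
proof -
  obtain Z1 Z2 where "p_integral P Z1" "A1 - B1 = to_fract P * Z1"
    and "p_integral P Z2" "A2 - B2 = to_fract P * Z2"
    using assms(1,2) unfolding qcong_iff by blast
  moreover have "A1 * A2 - B1 * B2 = A1 * (A2 - B2) + (A1 - B1) * B2"
    by (simp add: algebra_simps)
  ultimately have "A1 * A2 - B1 * B2 = to_fract P * (A1 * Z2 + Z1 * B2)"
    by (simp add: algebra_simps)
  moreover have "p_integral P (A1 * Z2 + Z1 * B2)"
    using assms(3,4) \<open>p_integral P Z1\<close> \<open>p_integral P Z2\<close> by (simp add: p_integral_add p_integral_mult)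
  ultimately show ?thesis
    unfolding qcong_iff by blast
qed

lemma qcong_prod:
  assumes "\<And>x. x \<in> S \<Longrightarrow> qcong (f x) (g x) P"
    and "\<And>x. x \<in> S \<Longrightarrow> p_integral P (f x)" and "\<And>x. x \<in> S \<Longrightarrow> p_integral P (g x)"
  shows "qcong (prod f S) (prod g S) P"
  using assms
  by (induction S rule: infinite_finite_induct)
    (simp_all add: qcong_refl qcong_mult p_integral_prod)


section \<open>Specialising \<open>a = q\<^sup>n\<close> modulo \<open>(1 - a q\<^sup>n)(a - q\<^sup>n)\<close>\<close>

lemma to_fract_power: "to_fract (x ^ n) = to_fract x ^ n"
  by (induction n) simp_all

lemma to_fract_prod: "to_fract (prod f A) = (\<Prod>x\<in>A. to_fract (f x))"
  by (induction A rule: infinite_finite_induct) simp_all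

lemma coprime_const_poly:
  fixes d :: "'a::idom_divide"
  assumes "d \<noteq> 0" and "coeff P i = 1"
  shows "coprime [:d:] P"
proof (rule coprimeI)
  fix c
  assume c_dvd_const: "c dvd [:d:]" and "c dvd P"
  have "degree c = 0"
    using dvd_imp_degree_le[OF c_dvd_const] assms(1) by simp
  then obtain e where c: "c = [:e:]"
    by (elim degree_eq_zeroE) simp
  then have "e dvd 1"
    using \<open>c dvd P\<close> assms(2) const_poly_dvd_iff[of e P] by metis
  then show "is_unit c"
    by (simp add: c is_unit_const_poly_iff)
qed

lemma coprime_one_minus_mult_right: "coprime a (1 - a * b)"
  for a b :: "'a::{algebraic_semidom,comm_ring_1}"
proof (rule coprimeI)
  fix c
  assume "c dvd a" and "c dvd 1 - a * b"
  then have "c dvd (1 - a * b) + a * b"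
    by (intro dvd_add) simp_all
  then show "is_unit c"
    by simp
qed

lemma coprime_diff_self_right:
  fixes a b :: "'a::{algebraic_semidom,comm_ring_1}"
  assumes "coprime b a"
  shows "coprime a (a - b)"
proof (rule coprimeI)
  fix c
  assume "c dvd a" and "c dvd a - b"
  then have "c dvd b"
    using dvd_diff[of c a "a - b"] by simp
  then show "is_unit c"
    using coprime_common_divisor[OF assms] \<open>c dvd a\<close> by blast
qed

definition modulus :: "nat \<Rightarrow> bipoly" where
  "modulus n = (1 - var_a * var_q ^ n) * (var_a - var_q ^ n)"

lemma var_q_power: "var_q ^ k = [:[:0, 1:] ^ k:]"
  by (simp add: var_q_def poly_const_pow)

lemma fq_power: "fq ^ k = to_fract [:[:0, 1:] ^ k:]"
  by (simp add: fq_def flip: to_fract_power var_q_power)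

lemma monomial_power_eq_1_iff: "[:0, 1:] ^ k = (1 :: rat poly) \<longleftrightarrow> k = 0"
  using degree_linear_power[of "0::rat" k] by auto

lemma fq_power_eq_1_iff: "fq ^ k = 1 \<longleftrightarrow> k = 0"
proof -
  have "fq ^ k = 1 \<longleftrightarrow> [:[:0, 1:] ^ k:] = (1 :: bipoly)"
    unfolding fq_power by (metis to_fract_1 to_fract_eq_iff)
  also have "\<dots> \<longleftrightarrow> [:0, 1:] ^ k = (1 :: rat poly)"
    by (metis one_pCons pCons_eq_iff)
  finally show ?thesis
    by (simp only: monomial_power_eq_1_iff)
qed

lemma fq_nonzero: "fq \<noteq> 0"
  by (simp add: fq_def var_q_def)

lemma coprime_const_modulus:
  assumes "d \<noteq> 0"
  shows "coprime [:d:] (modulus n)"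
proof -
  have "coprime [:d:] (1 - var_a * var_q ^ n)"
    by (rule coprime_const_poly[OF assms, where i = 0]) (simp add: var_a_def var_q_power)
  moreover have "coprime [:d:] (var_a - var_q ^ n)"
    by (rule coprime_const_poly[OF assms, where i = 1]) (simp add: var_a_def var_q_power)
  ultimately show ?thesis
    by (simp add: modulus_def)
qed

lemma coprime_var_a_modulus: "coprime var_a (modulus n)"
proof -
  have "coprime (var_q ^ n) var_a"
    unfolding var_q_power by (rule coprime_const_poly[where i = 1]) (simp_all add: var_a_def)
  then show ?thesis
    unfolding modulus_def by (simp add: coprime_one_minus_mult_right coprime_diff_self_right)
qed

lemma p_integral_fq_power: "p_integral P (fq ^ k)"
  unfolding fq_power by (rule p_integral_to_fract)

lemma fa_nonzero: "fa \<noteq> 0"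
  by (simp add: fa_def var_a_def)

lemma p_integral_divide_fa:
  assumes "p_integral (modulus n) X"
  shows "p_integral (modulus n) (X / fa)"
  unfolding fa_def by (rule p_integral_divide[OF assms _ coprime_var_a_modulus]) (simp add: var_a_def)

lemma p_integral_divide_fq_power:
  assumes "p_integral (modulus n) X"
  shows "p_integral (modulus n) (X / fq ^ k)"
  unfolding fq_power by (rule p_integral_divide[OF assms _ coprime_const_modulus]) simp_all

lemma qpoch_fq2_eq_const: "\<exists>c. c \<noteq> 0 \<and> qpoch (fq\<^sup>2) (fq\<^sup>2) k = to_fract [:c:]"
proof (intro exI conjI)
  have "1 - [:0, 1:] ^ (2 * j + 2) \<noteq> (0 :: rat poly)" for j
    using monomial_power_eq_1_iff[of "2 * j + 2"] by (simp only: right_minus_eq eq_commute[of 1])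
  then show "(\<Prod>j<k. 1 - [:0, 1:] ^ (2 * j + 2)) \<noteq> (0 :: rat poly)"
    by (simp only: prod_zero_iff finite_lessThan) blast
  have "1 - fq\<^sup>2 * (fq\<^sup>2) ^ j = to_fract [:1 - [:0, 1:] ^ (2 * j + 2):]" for j
  proof -
    have "fq\<^sup>2 * (fq\<^sup>2) ^ j = fq ^ (2 * j + 2)"
      by (simp flip: power_mult power_add add: algebra_simps)
    then have "1 - fq\<^sup>2 * (fq\<^sup>2) ^ j = 1 - to_fract [:[:0, 1:] ^ (2 * j + 2):]"
      by (simp only: fq_power)
    moreover have "[:1 - c:] = 1 - [:c:]" for c :: "rat poly"
      by (simp only: one_pCons diff_pCons diff_self)
    ultimately show ?thesis
      by (simp only: to_fract_diff to_fract_1)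
  qed
  then show "qpoch (fq\<^sup>2) (fq\<^sup>2) k = to_fract [:\<Prod>j<k. 1 - [:0, 1:] ^ (2 * j + 2):]"
    by (simp add: qpoch_def to_fract_prod flip: prod_to_poly)
qed

lemma p_integral_divide_qpoch_fq2:
  assumes "p_integral (modulus n) X"
  shows "p_integral (modulus n) (X / (qpoch (fq\<^sup>2) (fq\<^sup>2) k)\<^sup>2)"
proof -
  obtain c where "c \<noteq> 0" and "qpoch (fq\<^sup>2) (fq\<^sup>2) k = to_fract [:c:]"
    using qpoch_fq2_eq_const by blast
  then have "(qpoch (fq\<^sup>2) (fq\<^sup>2) k)\<^sup>2 = to_fract [:c\<^sup>2:]"
    by (simp add: poly_const_pow flip: to_fract_power)
  then show ?thesis
    using \<open>c \<noteq> 0\<close> by (simp add: p_integral_divide[OF assms] coprime_const_modulus)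
qed

lemma qcong_factor_substitution:
  assumes "p_integral (modulus n) r"
  shows "qcong ((1 - fa * r) * (1 - r / fa)) ((1 - fq ^ n * r) * (1 - r / fq ^ n)) (modulus n)"
proof -
  have "(1 - fa * r) * (1 - r / fa) - (1 - fq ^ n * r) * (1 - r / fq ^ n)
      = (1 - fa * fq ^ n) * (fa - fq ^ n) * (r / fa / fq ^ n)"
    using fa_nonzero fq_nonzero by (simp add: field_simps)
  also have "(1 - fa * fq ^ n) * (fa - fq ^ n) = to_fract (modulus n)"
    by (simp add: modulus_def fa_def fq_def to_fract_power)
  finally have "(1 - fa * r) * (1 - r / fa) - (1 - fq ^ n * r) * (1 - r / fq ^ n)
      = to_fract (modulus n) * (r / fa / fq ^ n)" .
  moreover have "p_integral (modulus n) (r / fa / fq ^ n)"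
    using assms by (intro p_integral_divide_fq_power p_integral_divide_fa)
  ultimately show ?thesis
    unfolding qcong_iff by blast
qed

lemma q_pochhammer_mult_q_pochhammer:
  fixes x q :: "'a::field"
  shows "q_pochhammer (x * q) (q\<^sup>2) k * q_pochhammer (q / x) (q\<^sup>2) k
     = (\<Prod>j<k. (1 - x * q ^ (2 * j + 1)) * (1 - q ^ (2 * j + 1) / x))"
  unfolding q_pochhammer_def prod.distrib[symmetric]
  by (intro prod.cong refl) (simp add: power_mult[symmetric] algebra_simps)

lemma qcong_summand_substitution:
  "qcong (qpoch (fa * fq) (fq\<^sup>2) k * qpoch (fq / fa) (fq\<^sup>2) k
            / (qpoch (fq\<^sup>2) (fq\<^sup>2) k)\<^sup>2 * fq ^ (2 * k))
         (qpoch (fq ^ n * fq) (fq\<^sup>2) k * qpoch (fq / fq ^ n) (fq\<^sup>2) k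
            / (qpoch (fq\<^sup>2) (fq\<^sup>2) k)\<^sup>2 * fq ^ (2 * k))
         (modulus n)"
proof -
  define F G where "F j = (1 - fa * fq ^ (2 * j + 1)) * (1 - fq ^ (2 * j + 1) / fa)"
    and "G j = (1 - fq ^ n * fq ^ (2 * j + 1)) * (1 - fq ^ (2 * j + 1) / fq ^ n)" for j
  define W where "W = fq ^ (2 * k) / (qpoch (fq\<^sup>2) (fq\<^sup>2) k)\<^sup>2"
  have "p_integral (modulus n) (F j)" "p_integral (modulus n) (G j)" for j
    unfolding F_def G_def
    by (intro p_integral_mult p_integral_diff p_integral_1 p_integral_divide_fa
          p_integral_divide_fq_power p_integral_fq_power
          p_integral_to_fract[of _ var_a, folded fa_def]; fail)+
  moreover have "qcong (F j) (G j) (modulus n)" for j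
    unfolding F_def G_def by (rule qcong_factor_substitution) (rule p_integral_fq_power)
  moreover have "p_integral (modulus n) W"
    unfolding W_def by (intro p_integral_divide_qpoch_fq2 p_integral_fq_power)
  ultimately have "qcong ((\<Prod>j<k. F j) * W) ((\<Prod>j<k. G j) * W) (modulus n)"
    by (intro qcong_mult qcong_prod qcong_refl p_integral_prod)
  then show ?thesis
    by (simp add: qpoch_eq_q_pochhammer q_pochhammer_mult_q_pochhammer F_def G_def W_def)
qed

lemma summand_at_odd_power_eq_qchu_term:
  fixes q :: "'a::field"
  assumes "q \<noteq> 0"
  shows "q_pochhammer (q ^ (2 * m + 1) * q) (q\<^sup>2) k * q_pochhammer (q / q ^ (2 * m + 1)) (q\<^sup>2) k
           / (q_pochhammer (q\<^sup>2) (q\<^sup>2) k)\<^sup>2 * q ^ (2 * k)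
         = qchu_term (q\<^sup>2) m k"
proof -
  have "q ^ (2 * m + 1) * q = (q\<^sup>2) ^ Suc m"
    by (simp add: power_mult[symmetric] power_add flip: power2_eq_square)
  moreover have "q / q ^ (2 * m + 1) = 1 / (q\<^sup>2) ^ m" and "q ^ (2 * k) = (q\<^sup>2) ^ k"
    using assms by (simp_all add: power_mult[symmetric])
  ultimately show ?thesis
    by (simp add: qchu_term_def mult.commute)
qed

theorem corollary4p3:
  fixes n :: nat
  assumes "n > 0" and "odd n"
  shows "qcong
    (\<Sum>k<n. qpoch (fa * fq) (fq^2) k * qpoch (fq / fa) (fq^2) k
              / (qpoch (fq^2) (fq^2) k)^2 * fq^(2*k))
    ((-1)^((n - 1) div 2) * fq^((n^2 - 1) div 4))
    ((1 - var_a * var_q^n) * (var_a - var_q^n))"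
proof -
  obtain m where n: "n = 2 * m + 1"
    using assms(2) oddE by blast
  have p: "fq\<^sup>2 \<noteq> 0" "\<And>i. i > 0 \<Longrightarrow> (fq\<^sup>2) ^ i \<noteq> 1"
    using fq_nonzero by (simp_all add: fq_power_eq_1_iff flip: power_mult)
  have "qcong (\<Sum>k<n. qpoch (fa * fq) (fq^2) k * qpoch (fq / fa) (fq^2) k
                          / (qpoch (fq^2) (fq^2) k)^2 * fq^(2*k))
              (\<Sum>k<n. qchu_term (fq\<^sup>2) m k) (modulus n)"
    using qcong_summand_substitution[of _ n]
    unfolding n qpoch_eq_q_pochhammer summand_at_odd_power_eq_qchu_term[OF fq_nonzero]
    by (rule qcong_sum)
  also have "(\<Sum>k<n. qchu_term (fq\<^sup>2) m k) = (\<Sum>k\<le>m. qchu_term (fq\<^sup>2) m k)"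
    by (rule sum.mono_neutral_right) (auto simp: n intro!: qchu_term_eq_0[OF p(1)])
  also have "\<dots> = (-1) ^ m * (fq\<^sup>2) ^ (m * Suc m div 2)"
    by (rule qchu_sum[OF p])
  also have "\<dots> = (-1)^((n - 1) div 2) * fq^((n^2 - 1) div 4)"
  proof -
    have "(n\<^sup>2 - 1) div 4 = m * Suc m" and "(n - 1) div 2 = m"
      by (simp_all add: n power2_eq_square algebra_simps)
    moreover have "(fq\<^sup>2) ^ (m * Suc m div 2) = fq ^ (m * Suc m)"
      by (simp add: power_mult[symmetric])
    ultimately show ?thesis
      by simp
  qed
  finally show ?thesis
    by (simp add: modulus_def)
qed

end
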